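(* Let $\kappa<\lambda$ be infinite regular cardinals. Then $\mathbb{P}(\lambda,\kappa)$ is $\kappa$-directed closed.
   Context: For a set $C$ of ordinals, $C'=\{\alpha\in C\mid\sup(C\cap\alpha)=\alpha\}$. $\mathbb{P}(\lambda,\kappa)$ consists of conditions $p=\langle C^p_{\alpha,i}\mid\alpha\le\gamma^p,\ i(\alpha)^p\le i<\kappa\rangle$ such that: (1) $\gamma^p<\lambda$ is a limit ordinal and for all limit $\alpha\le\gamma^p$, $i(\alpha)^p<\kappa$; (2) for limit $\alpha\le\gamma^p$ and $i(\alpha)^p\le i<\kappa$, $C^p_{\alpha,i}$ is club in $\alpha$; (3) for limit $\alpha\le\gamma^p$ and $i(\alpha)^p\le i<j<\kappa$, $C^p_{\alpha,i}\subseteq C^p_{\alpha,j}$; (4) for limit $\alpha<\beta\le\gamma^p$ and $i(\beta)^p\le i<\kappa$, if $\alpha\in(C^p_{\beta,i})'$ then $i(\alpha)^p\le i$ and $C^p_{\beta,i}\cap\alpha=C^p_{\alpha,i}$; (5) for limit $\alpha<\beta\le\gamma^p$ there is $i<\kappa$ with $\alpha\in(C^p_{\beta,i})'$. The order is end-extension: $q\le p$ iff $\gamma^q\ge\gamma^p$ and for all limit $\alpha\le\gamma^p$, $i(\alpha)^q=i(\alpha)^p$ and $C^q_{\alpha,i}=C^p_{\alpha,i}$ for $i(\alpha)^p\le i<\kappa$. A poset is $\kappa$-directed closed if every directed subset of size $<\kappa$ has a lower bound. *)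

theory Defs
  imports Main
begin

text \<open>Ordinals are modelled as elements of an arbitrary well-ordered type 'o;
the elements below x form the ordinal x.\<close>

definition below :: "'o::wellorder \<Rightarrow> 'o set" where
  "below a = {x. x < a}"

text \<open>sup(C \<inter> a) = a  (for ordinals: C is unbounded below a; vacuous for a = 0)\<close>
definition sup_eq :: "'o::wellorder set \<Rightarrow> 'o \<Rightarrow> bool" where
  "sup_eq C a \<longleftrightarrow> (\<forall>b<a. \<exists>d\<in>C. b < d \<and> d < a)"

definition derived :: "'o::wellorder set \<Rightarrow> 'o set" where
  "derived C = {a \<in> C. sup_eq C a}"

definition is_limit :: "'o::wellorder \<Rightarrow> bool" where
  "is_limit a \<longleftrightarrow> (\<exists>b. b < a) \<and> (\<forall>b<a. \<exists>d. b < d \<and> d < a)"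

definition club_in :: "'o::wellorder set \<Rightarrow> 'o \<Rightarrow> bool" where
  "club_in C a \<longleftrightarrow> C \<subseteq> below a \<and> (\<forall>b<a. \<exists>d\<in>C. b \<le> d)
      \<and> (\<forall>b<a. is_limit b \<and> sup_eq C b \<longrightarrow> b \<in> C)"

definition infinite_regular_cardinal :: "'o::wellorder \<Rightarrow> bool" where
  "infinite_regular_cardinal k \<longleftrightarrow> infinite (below k)
     \<and> (\<forall>a<k. (card_of (below a), card_of (below k)) \<in> ordLess)
     \<and> (\<forall>A. A \<subseteq> below k \<and> (\<forall>b<k. \<exists>a\<in>A. b \<le> a)
            \<longrightarrow> (card_of A, card_of (below k)) \<notin> ordLess)"

text \<open>A condition p is a triple (gamma, i, C): gamma = gamma^p, i a = i(a)^p,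
  C a j = C^p_{a,j}.  Outside the domain the values are normalised
  (i a = undefined, C a j = {}), so that equal conditions are equal triples.\<close>
type_synonym 'o cond = "'o \<times> ('o \<Rightarrow> 'o) \<times> ('o \<Rightarrow> 'o \<Rightarrow> 'o set)"

definition in_P :: "'o::wellorder \<Rightarrow> 'o \<Rightarrow> 'o cond \<Rightarrow> bool" where
  "in_P lam k p \<longleftrightarrow> (case p of (g, I, C) \<Rightarrow>
     g < lam \<and> is_limit g \<and> (\<forall>a\<le>g. is_limit a \<longrightarrow> I a < k)
     \<and> (\<forall>a\<le>g. is_limit a \<longrightarrow> (\<forall>i. I a \<le> i \<and> i < k \<longrightarrow> club_in (C a i) a))
     \<and> (\<forall>a\<le>g. is_limit a \<longrightarrow> (\<forall>i j. I a \<le> i \<and> i < j \<and> j < k \<longrightarrow> C a i \<subseteq> C a j))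
     \<and> (\<forall>a b. is_limit a \<and> is_limit b \<and> a < b \<and> b \<le> g \<longrightarrow>
          (\<forall>i. I b \<le> i \<and> i < k \<and> a \<in> derived (C b i) \<longrightarrow>
               I a \<le> i \<and> C b i \<inter> below a = C a i))
     \<and> (\<forall>a b. is_limit a \<and> is_limit b \<and> a < b \<and> b \<le> g \<longrightarrow>
          (\<exists>i<k. a \<in> derived (C b i)))
     \<and> (\<forall>a. \<not> (a \<le> g \<and> is_limit a) \<longrightarrow> I a = undefined)
     \<and> (\<forall>a i. \<not> (a \<le> g \<and> is_limit a \<and> I a \<le> i \<and> i < k) \<longrightarrow> C a i = {}))"

definition P :: "'o::wellorder \<Rightarrow> 'o \<Rightarrow> 'o cond set" where
  "P lam k = {p. in_P lam k p}"

definition ext_le :: "'o::wellorder \<Rightarrow> 'o cond \<Rightarrow> 'o cond \<Rightarrow> bool" where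
  "ext_le k q p \<longleftrightarrow> (case q of (gq, Iq, Cq) \<Rightarrow> case p of (gp, Ip, Cp) \<Rightarrow>
     gp \<le> gq \<and> (\<forall>a\<le>gp. is_limit a \<longrightarrow>
        Iq a = Ip a \<and> (\<forall>i. Ip a \<le> i \<and> i < k \<longrightarrow> Cq a i = Cp a i)))"

definition directed_closed :: "'o::wellorder \<Rightarrow> 'o \<Rightarrow> bool" where
  "directed_closed lam k \<longleftrightarrow>
     (\<forall>D. D \<subseteq> P lam k
        \<and> (\<forall>p\<in>D. \<forall>p'\<in>D. \<exists>r\<in>D. ext_le k r p \<and> ext_le k r p')
        \<and> (card_of D, card_of (below k)) \<in> ordLess
        \<longrightarrow> (\<exists>q\<in>P lam k. \<forall>p\<in>D. ext_le k q p))"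

end

theory Submission
  imports Defs
begin

text \<open>Any two members of a directed set D agree wherever both are defined, since both
  are end-extended by a common member; so a member of maximal height extends all the others.
  Otherwise the heights \<gamma>^p have a supremum \<gamma>, a limit below \<lambda> by the regularity of \<lambda>.
  By the regularity of \<kappa> there is one index i* < \<kappa> above every i(\<gamma>^p)^p and above an
  index witnessing \<gamma>^p \<in> (C^p'_{\<gamma>^p', i})' for every pair with \<gamma>^p < \<gamma>^p'. For i \<ge> i* the
  top clubs C^p_{\<gamma>^p, i} are then initial segments of one another, so their union is club
  in \<gamma> and coheres with all lower levels; putting these unions on level \<gamma> on top of the
  common part of D yields a lower bound.\<close>

unbundle cardinal_syntax

definition cond_height :: "'o cond \<Rightarrow> 'o" where
  "cond_height p = fst p"

definition cond_index :: "'o cond \<Rightarrow> 'o \<Rightarrow> 'o" where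
  "cond_index p = fst (snd p)"

definition cond_club :: "'o cond \<Rightarrow> 'o \<Rightarrow> 'o \<Rightarrow> 'o set" where
  "cond_club p = snd (snd p)"

lemma cond_eq_iff: "p = q \<longleftrightarrow>
    cond_height p = cond_height q \<and> cond_index p = cond_index q \<and> cond_club p = cond_club q"
  by (cases p; cases q) (simp add: cond_height_def cond_index_def cond_club_def)

lemma in_P_iff: "in_P lam k p \<longleftrightarrow>
     cond_height p < lam \<and> is_limit (cond_height p)
     \<and> (\<forall>a\<le>cond_height p. is_limit a \<longrightarrow> cond_index p a < k)
     \<and> (\<forall>a\<le>cond_height p. is_limit a \<longrightarrow>
          (\<forall>i. cond_index p a \<le> i \<and> i < k \<longrightarrow> club_in (cond_club p a i) a))
     \<and> (\<forall>a\<le>cond_height p. is_limit a \<longrightarrow>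
          (\<forall>i j. cond_index p a \<le> i \<and> i < j \<and> j < k \<longrightarrow> cond_club p a i \<subseteq> cond_club p a j))
     \<and> (\<forall>a b. is_limit a \<and> is_limit b \<and> a < b \<and> b \<le> cond_height p \<longrightarrow>
          (\<forall>i. cond_index p b \<le> i \<and> i < k \<and> a \<in> derived (cond_club p b i) \<longrightarrow>
               cond_index p a \<le> i \<and> cond_club p b i \<inter> below a = cond_club p a i))
     \<and> (\<forall>a b. is_limit a \<and> is_limit b \<and> a < b \<and> b \<le> cond_height p \<longrightarrow>
          (\<exists>i<k. a \<in> derived (cond_club p b i)))
     \<and> (\<forall>a. \<not> (a \<le> cond_height p \<and> is_limit a) \<longrightarrow> cond_index p a = undefined)
     \<and> (\<forall>a i. \<not> (a \<le> cond_height p \<and> is_limit a \<and> cond_index p a \<le> i \<and> i < k)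
          \<longrightarrow> cond_club p a i = {})"
  by (cases p) (simp only: in_P_def cond_height_def cond_index_def cond_club_def
      prod.case fst_conv snd_conv)

lemma ext_le_iff: "ext_le k q p \<longleftrightarrow> cond_height p \<le> cond_height q
    \<and> (\<forall>a\<le>cond_height p. is_limit a \<longrightarrow> cond_index q a = cond_index p a
        \<and> (\<forall>i. cond_index p a \<le> i \<and> i < k \<longrightarrow> cond_club q a i = cond_club p a i))"
  by (cases p; cases q) (simp only: ext_le_def cond_height_def cond_index_def cond_club_def
      prod.case fst_conv snd_conv)

context
  fixes lam k :: "'o::wellorder" and p :: "'o cond"
  assumes p: "in_P lam k p"
begin

lemma cond_height_less: "cond_height p < lam"
  using p unfolding in_P_iff by simp

lemma cond_height_limit: "is_limit (cond_height p)"
  using p unfolding in_P_iff by simp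

lemma cond_index_less: "a \<le> cond_height p \<Longrightarrow> is_limit a \<Longrightarrow> cond_index p a < k"
  using p unfolding in_P_iff by simp

lemma cond_club_club:
  "a \<le> cond_height p \<Longrightarrow> is_limit a \<Longrightarrow> cond_index p a \<le> i \<Longrightarrow> i < k
    \<Longrightarrow> club_in (cond_club p a i) a"
  using p unfolding in_P_iff by simp

lemma cond_club_mono:
  assumes "a \<le> cond_height p" "is_limit a" "cond_index p a \<le> i" "i \<le> j" "j < k"
  shows "cond_club p a i \<subseteq> cond_club p a j"
proof (cases "i = j")
  case False
  then have "i < j" using assms(4) by simp
  with assms show ?thesis
    using p unfolding in_P_iff by simp
qed simp

lemma cond_club_coherent:
  "is_limit a \<Longrightarrow> is_limit b \<Longrightarrow> a < b \<Longrightarrow> b \<le> cond_height p \<Longrightarrow> cond_index p b \<le> i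
    \<Longrightarrow> i < k \<Longrightarrow> a \<in> derived (cond_club p b i)
    \<Longrightarrow> cond_index p a \<le> i \<and> cond_club p b i \<inter> below a = cond_club p a i"
  using p unfolding in_P_iff by simp

lemma cond_club_derived_ex:
  "is_limit a \<Longrightarrow> is_limit b \<Longrightarrow> a < b \<Longrightarrow> b \<le> cond_height p
    \<Longrightarrow> \<exists>i<k. a \<in> derived (cond_club p b i)"
  using p unfolding in_P_iff by simp

lemma cond_index_outside: "\<not> (a \<le> cond_height p \<and> is_limit a) \<Longrightarrow> cond_index p a = undefined"
  using p unfolding in_P_iff by simp

lemma cond_club_outside:
  "\<not> (a \<le> cond_height p \<and> is_limit a \<and> cond_index p a \<le> i \<and> i < k) \<Longrightarrow> cond_club p a i = {}"
  using p unfolding in_P_iff by simp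

lemma cond_club_nonempty:
  "x \<in> cond_club p a i \<Longrightarrow> a \<le> cond_height p \<and> is_limit a \<and> cond_index p a \<le> i \<and> i < k"
  using cond_club_outside by blast

lemma cond_club_less: "x \<in> cond_club p a i \<Longrightarrow> x < a"
  using cond_club_nonempty cond_club_club unfolding club_in_def below_def by blast

end

lemma derived_mono: "a \<in> derived A \<Longrightarrow> A \<subseteq> B \<Longrightarrow> a \<in> derived B"
  unfolding derived_def sup_eq_def by blast

lemma sup_eq_restrict: "sup_eq A a \<Longrightarrow> a \<le> g \<Longrightarrow> sup_eq (A \<inter> below g) a"
  unfolding sup_eq_def below_def using order.strict_trans2 by blast

lemma derived_restrict: "a \<in> derived A \<Longrightarrow> a < g \<Longrightarrow> a \<in> derived (A \<inter> below g)"
proof -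
  assume "a \<in> derived A" "a < g"
  then have "a \<in> A \<inter> below g" "sup_eq (A \<inter> below g) a"
    using sup_eq_restrict[OF _ less_imp_le] unfolding derived_def below_def by auto
  then show ?thesis unfolding derived_def by blast
qed

lemma club_in_below: "is_limit a \<Longrightarrow> club_in (below a) a"
  unfolding club_in_def below_def by auto

lemma derived_below: "is_limit a \<Longrightarrow> a < b \<Longrightarrow> a \<in> derived (below b)"
  unfolding derived_def sup_eq_def below_def is_limit_def using order.strict_trans by blast

lemma strict_sup_exists:
  fixes S :: "'o::wellorder set"
  assumes "S \<noteq> {}" and no_max: "\<forall>x\<in>S. \<exists>y\<in>S. x < y" and bound: "\<forall>x\<in>S. x < b"
  obtains g where "g \<le> b" "\<forall>x\<in>S. x < g" "\<forall>a<g. \<exists>x\<in>S. a < x" "is_limit g"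
proof
  define g where "g = (LEAST g. \<forall>x\<in>S. x \<le> g)"
  have ub: "\<forall>x\<in>S. x \<le> g"
    unfolding g_def by (rule LeastI[of _ b]) (use bound in \<open>blast intro: less_imp_le\<close>)
  have least: "g \<le> c" if "\<forall>x\<in>S. x \<le> c" for c
    unfolding g_def using that by (rule Least_le)
  show "g \<le> b" using least bound by (blast intro: less_imp_le)
  show below: "\<forall>x\<in>S. x < g"
  proof
    fix x assume "x \<in> S"
    then obtain y where "y \<in> S" "x < y" using no_max by blast
    then show "x < g" using ub order.strict_trans2 by blast
  qed
  show cofinal: "\<forall>a<g. \<exists>x\<in>S. a < x"
  proof (intro allI impI)
    fix a assume "a < g"
    show "\<exists>x\<in>S. a < x"
    proof (rule ccontr)
      assume "\<not> (\<exists>x\<in>S. a < x)"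
      then have "g \<le> a" using least by (simp add: not_less)
      with \<open>a < g\<close> show False by simp
    qed
  qed
  show "is_limit g"
    unfolding is_limit_def using assms(1) below cofinal by blast
qed

lemma finite_card_of_ordLess_infinite: "finite A \<Longrightarrow> infinite B \<Longrightarrow> |A| <o |B|"
  by (meson card_of_Well_order card_of_ordLeq_finite not_ordLeq_iff_ordLess)

lemma card_of_Times_self_ordLess_infinite:
  assumes "infinite B" "|A| <o |B|"
  shows "|A \<times> A| <o |B|"
proof (cases "finite A")
  case True
  then have "finite (A \<times> A)" by simp
  then show ?thesis using assms(1) by (rule finite_card_of_ordLess_infinite)
next
  case False
  then have "|A \<times> A| =o |A|" by (rule card_of_Times_same_infinite)
  then show ?thesis using assms(2) by (rule ordIso_ordLess_trans)
qed

lemma regular_cardinal_uniform_bound: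
  assumes k: "infinite_regular_cardinal k" and small: "|A| <o |below k|"
    and bounded: "\<forall>x\<in>A. \<exists>j<k. Q x j"
  obtains b where "b < k" "\<forall>x\<in>A. \<exists>j<b. Q x j"
proof -
  obtain f where f: "\<forall>x\<in>A. f x < k \<and> Q x (f x)" using bchoice[OF bounded] by blast
  have "|f ` A| <o |below k|" by (rule ordLeq_ordLess_trans[OF card_of_image small])
  moreover have "f ` A \<subseteq> below k" using f unfolding below_def by blast
  ultimately have "\<not> (\<forall>b<k. \<exists>a\<in>f ` A. b \<le> a)"
    using k unfolding infinite_regular_cardinal_def by blast
  then obtain b where "b < k" "\<forall>x\<in>A. f x < b" by (auto simp: not_le)
  with f show ?thesis using that by blast
qed

lemma infinite_regular_cardinal_limit:
  assumes k: "infinite_regular_cardinal k"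
  shows "is_limit k"
proof -
  have inf: "infinite (below k)" using k unfolding infinite_regular_cardinal_def by blast
  then obtain b where "b < k" using infinite_imp_nonempty unfolding below_def by blast
  moreover have "\<exists>d. b < d \<and> d < k" if "b < k" for b
  proof (rule ccontr)
    assume "\<nexists>d. b < d \<and> d < k"
    then have "\<forall>c<k. \<exists>a\<in>{b}. c \<le> a" using not_le by blast
    moreover have "{b} \<subseteq> below k" using that unfolding below_def by simp
    ultimately show False
      using k inf finite_card_of_ordLess_infinite[of "{b}"]
      unfolding infinite_regular_cardinal_def by blast
  qed
  ultimately show ?thesis unfolding is_limit_def by blast
qed

lemma ext_le_same_height_eq:
  assumes r: "in_P lam k r" and p: "in_P lam k p"
    and rp: "ext_le k r p" and same: "cond_height r = cond_height p"
  shows "r = p"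
proof -
  have index: "cond_index r a = cond_index p a" for a
  proof (cases "a \<le> cond_height p \<and> is_limit a")
    case True
    with rp show ?thesis unfolding ext_le_iff by blast
  next
    case False
    with same show ?thesis using cond_index_outside[OF r] cond_index_outside[OF p] by simp
  qed
  have "cond_club r a i = cond_club p a i" for a i
  proof (cases "a \<le> cond_height p \<and> is_limit a \<and> cond_index p a \<le> i \<and> i < k")
    case True
    with rp show ?thesis unfolding ext_le_iff by blast
  next
    case False
    with same index show ?thesis using cond_club_outside[OF r] cond_club_outside[OF p] by simp
  qed
  with same index show ?thesis unfolding cond_eq_iff by blast
qed

lemma P_nonempty:
  fixes k lam :: "'o::wellorder"
  assumes k: "infinite_regular_cardinal k" and "k < lam"
  shows "P lam k \<noteq> {}"
proof -
  have k_limit: "is_limit k" using infinite_regular_cardinal_limit[OF k] .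
  then obtain z where "z < k" unfolding is_limit_def by blast
  define p :: "'o cond" where "p = (k, \<lambda>a. if a \<le> k \<and> is_limit a then z else undefined,
      \<lambda>a i. if a \<le> k \<and> is_limit a \<and> z \<le> i \<and> i < k then below a else {})"
  have below_inter: "below b \<inter> below a = below a" if "a < b" for a b :: 'o
    using that order.strict_trans unfolding below_def by blast
  have "in_P lam k p"
    unfolding in_P_iff
  proof (intro conjI allI impI)
    fix a b assume ab: "is_limit a \<and> is_limit b \<and> a < b \<and> b \<le> cond_height p"
    then have "a \<in> derived (below b)" using derived_below by blast
    then have "a \<in> derived (cond_club p b z)"
      using ab \<open>z < k\<close> by (simp add: p_def cond_height_def cond_club_def)
    with \<open>z < k\<close> show "\<exists>i<k. a \<in> derived (cond_club p b i)" by blast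
  qed (use assms k_limit \<open>z < k\<close> below_inter in
      \<open>auto simp: p_def cond_height_def cond_index_def cond_club_def club_in_below\<close>)
  then show ?thesis unfolding P_def by blast
qed

lemma pair_index_bound:
  assumes p: "in_P lam k p" and p': "in_P lam k p'"
  shows "\<exists>j<k. cond_index p (cond_height p) \<le> j \<and> cond_index p' (cond_height p') \<le> j
    \<and> (cond_height p < cond_height p' \<longrightarrow> cond_height p \<in> derived (cond_club p' (cond_height p') j))"
proof -
  let ?h = "cond_height p" and ?h' = "cond_height p'"
  define i where "i = max (cond_index p ?h) (cond_index p' ?h')"
  have i_less: "i < k"
    unfolding i_def
    using cond_index_less[OF p order.refl cond_height_limit[OF p]]
      cond_index_less[OF p' order.refl cond_height_limit[OF p']] by simp
  show ?thesis
  proof (cases "?h < ?h'")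
    case True
    then obtain i0 where "i0 < k" and i0: "?h \<in> derived (cond_club p' ?h' i0)"
      using cond_club_derived_ex[OF p' cond_height_limit[OF p] cond_height_limit[OF p']] by blast
    define j where "j = max i i0"
    have "cond_index p' ?h' \<le> i0"
      using i0 cond_club_nonempty[OF p'] unfolding derived_def by blast
    then have "cond_club p' ?h' i0 \<subseteq> cond_club p' ?h' j"
      using cond_club_mono[OF p' order.refl cond_height_limit[OF p']] i_less \<open>i0 < k\<close>
      unfolding j_def by simp
    then have "?h \<in> derived (cond_club p' ?h' j)" using i0 derived_mono by blast
    moreover have "j < k" using i_less \<open>i0 < k\<close> unfolding j_def by simp
    moreover have "cond_index p ?h \<le> j" "cond_index p' ?h' \<le> j"
      by (simp_all add: j_def i_def le_max_iff_disj)
    ultimately show ?thesis by blast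
  next
    case False
    with i_less show ?thesis by (intro exI[of _ i]) (simp add: i_def le_max_iff_disj)
  qed
qed

locale directed_family =
  fixes lam k :: "'o::wellorder" and D :: "'o cond set"
  assumes conds: "D \<subseteq> P lam k"
    and directed: "\<forall>p\<in>D. \<forall>p'\<in>D. \<exists>r\<in>D. ext_le k r p \<and> ext_le k r p'"
begin

lemma member_in_P: "p \<in> D \<Longrightarrow> in_P lam k p"
  using conds unfolding P_def by blast

lemma members_agree:
  assumes "p \<in> D" "p' \<in> D" "is_limit a" "a \<le> cond_height p" "a \<le> cond_height p'"
  shows "cond_index p a = cond_index p' a \<and> cond_club p a = cond_club p' a"
proof -
  obtain r where "r \<in> D" "ext_le k r p" "ext_le k r p'" using directed assms by blast
  then have index: "cond_index p a = cond_index p' a"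
    and club: "cond_index p a \<le> i \<and> i < k \<Longrightarrow> cond_club p a i = cond_club p' a i" for i
    using assms unfolding ext_le_iff by auto
  have "cond_club p a i = cond_club p' a i" for i
  proof (cases "cond_index p a \<le> i \<and> i < k")
    case True
    then show ?thesis by (rule club)
  next
    case False
    then show ?thesis
      using index cond_club_outside[OF member_in_P[OF \<open>p \<in> D\<close>]]
        cond_club_outside[OF member_in_P[OF \<open>p' \<in> D\<close>]] by simp
  qed
  with index show ?thesis by blast
qed

lemma highest_member_lower_bound:
  assumes p0: "p0 \<in> D" and highest: "\<forall>p\<in>D. cond_height p \<le> cond_height p0"
  shows "\<forall>p\<in>D. ext_le k p0 p"
proof
  fix p assume "p \<in> D"
  then obtain r where r: "r \<in> D" "ext_le k r p0" "ext_le k r p" using directed p0 by blast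
  then have "cond_height r = cond_height p0"
    using highest unfolding ext_le_iff by (simp add: order_antisym)
  then have "r = p0" using ext_le_same_height_eq member_in_P r p0 by blast
  with r show "ext_le k p0 p" by simp
qed

lemma height_sup_exists:
  assumes k: "infinite_regular_cardinal k" and lam: "infinite_regular_cardinal lam"
    and "k < lam" and small: "|D| <o |below k|"
    and "D \<noteq> {}" and no_highest: "\<forall>p\<in>D. \<exists>p'\<in>D. cond_height p < cond_height p'"
  obtains g where "g < lam" "is_limit g" "\<forall>p\<in>D. cond_height p < g"
    "\<forall>a<g. \<exists>p\<in>D. a < cond_height p"
proof -
  have "|below k| <o |below lam|"
    using lam \<open>k < lam\<close> unfolding infinite_regular_cardinal_def by blast
  with small have "|D| <o |below lam|" by (rule ordLess_transitive)
  moreover have "\<forall>p\<in>D. \<exists>j<lam. j = cond_height p"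
    using cond_height_less[OF member_in_P] by blast
  ultimately obtain b where "b < lam" "\<forall>p\<in>D. \<exists>j<b. j = cond_height p"
    by (rule regular_cardinal_uniform_bound[OF lam])
  then have bound: "\<forall>x\<in>cond_height ` D. x < b" by blast
  have "cond_height ` D \<noteq> {}" "\<forall>x\<in>cond_height ` D. \<exists>y\<in>cond_height ` D. x < y"
    using \<open>D \<noteq> {}\<close> no_highest by auto
  then obtain g where "g \<le> b" "\<forall>x\<in>cond_height ` D. x < g"
    "\<forall>a<g. \<exists>x\<in>cond_height ` D. a < x" "is_limit g"
    using bound by (rule strict_sup_exists)
  moreover from \<open>g \<le> b\<close> \<open>b < lam\<close> have "g < lam" by (rule order.strict_trans1)
  ultimately show ?thesis using that by auto
qed

lemma threshold_exists:
  assumes k: "infinite_regular_cardinal k" and small: "|D| <o |below k|"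
  obtains i where "i < k" "\<forall>p\<in>D. cond_index p (cond_height p) \<le> i"
    "\<forall>p\<in>D. \<forall>p'\<in>D. \<forall>j. cond_height p < cond_height p' \<and> i \<le> j \<and> j < k
       \<longrightarrow> cond_height p \<in> derived (cond_club p' (cond_height p') j)"
proof -
  define good :: "'o cond \<Rightarrow> 'o cond \<Rightarrow> 'o \<Rightarrow> bool"
    where "good p p' j \<longleftrightarrow> cond_index p (cond_height p) \<le> j \<and> cond_index p' (cond_height p') \<le> j
      \<and> (cond_height p < cond_height p' \<longrightarrow> cond_height p \<in> derived (cond_club p' (cond_height p') j))"
    for p p' j
  have "|D \<times> D| <o |below k|"
    using k small card_of_Times_self_ordLess_infinite unfolding infinite_regular_cardinal_def by blast
  moreover have "\<forall>x\<in>D \<times> D. \<exists>j<k. good (fst x) (snd x) j"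
  proof
    fix x assume "x \<in> D \<times> D"
    then have "in_P lam k (fst x)" "in_P lam k (snd x)" using member_in_P by auto
    then show "\<exists>j<k. good (fst x) (snd x) j" unfolding good_def by (rule pair_index_bound)
  qed
  ultimately obtain i where "i < k" and i: "\<forall>x\<in>D \<times> D. \<exists>j<i. good (fst x) (snd x) j"
    by (rule regular_cardinal_uniform_bound[OF k])
  show ?thesis
  proof
    show "i < k" by fact
    show "\<forall>p\<in>D. cond_index p (cond_height p) \<le> i"
      using i unfolding good_def by (fastforce dest: less_imp_le)
    show "\<forall>p\<in>D. \<forall>p'\<in>D. \<forall>j. cond_height p < cond_height p' \<and> i \<le> j \<and> j < k
       \<longrightarrow> cond_height p \<in> derived (cond_club p' (cond_height p') j)"
    proof (intro ballI allI impI)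
      fix p p' j
      assume "p \<in> D" "p' \<in> D" and j: "cond_height p < cond_height p' \<and> i \<le> j \<and> j < k"
      then obtain j0 where "j0 < i" "cond_index p' (cond_height p') \<le> j0"
        and j0: "cond_height p \<in> derived (cond_club p' (cond_height p') j0)"
        using i unfolding good_def by fastforce
      moreover have "j0 \<le> j" using less_imp_le[OF \<open>j0 < i\<close>] j by (blast intro: order.trans)
      ultimately have "cond_club p' (cond_height p') j0 \<subseteq> cond_club p' (cond_height p') j"
        using cond_club_mono[OF member_in_P[OF \<open>p' \<in> D\<close>] order.refl] j
          cond_height_limit[OF member_in_P[OF \<open>p' \<in> D\<close>]] by blast
      with j0 show "cond_height p \<in> derived (cond_club p' (cond_height p') j)"
        using derived_mono by blast
    qed
  qed
qed

end

locale amalgamation = directed_family +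
  fixes gamma istar :: "'o::wellorder"
  assumes heights_below: "p \<in> D \<Longrightarrow> cond_height p < gamma"
    and heights_cofinal: "a < gamma \<Longrightarrow> \<exists>p\<in>D. a < cond_height p"
    and gamma_less: "gamma < lam"
    and gamma_limit: "is_limit gamma"
    and istar_less: "istar < k"
    and index_le_istar: "p \<in> D \<Longrightarrow> cond_index p (cond_height p) \<le> istar"
    and height_derived: "p \<in> D \<Longrightarrow> p' \<in> D \<Longrightarrow> cond_height p < cond_height p' \<Longrightarrow> istar \<le> i
      \<Longrightarrow> i < k \<Longrightarrow> cond_height p \<in> derived (cond_club p' (cond_height p') i)"
begin

lemma members_coherent:
  assumes "p \<in> D" "p' \<in> D" "cond_height p < cond_height p'" "istar \<le> i" "i < k"
  shows "cond_club p' (cond_height p') i \<inter> below (cond_height p) = cond_club p (cond_height p) i"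
proof -
  have p: "in_P lam k p" and p': "in_P lam k p'" using assms member_in_P by auto
  have "cond_index p' (cond_height p') \<le> i" using index_le_istar assms order.trans by blast
  then have "cond_club p' (cond_height p') i \<inter> below (cond_height p) = cond_club p' (cond_height p) i"
    using cond_club_coherent[OF p' cond_height_limit[OF p] cond_height_limit[OF p'] assms(3)]
      height_derived assms by blast
  also have "\<dots> = cond_club p (cond_height p) i"
    using members_agree[OF \<open>p' \<in> D\<close> \<open>p \<in> D\<close> cond_height_limit[OF p]] assms(3) by simp
  finally show ?thesis .
qed

definition top_club :: "'o \<Rightarrow> 'o set" where
  "top_club i = (\<Union>p\<in>D. cond_club p (cond_height p) i)"

lemma top_club_restrict:
  assumes "p \<in> D" "istar \<le> i" "i < k"
  shows "top_club i \<inter> below (cond_height p) = cond_club p (cond_height p) i"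
proof
  show "cond_club p (cond_height p) i \<subseteq> top_club i \<inter> below (cond_height p)"
    using assms(1) cond_club_less[OF member_in_P[OF assms(1)]] unfolding top_club_def below_def by blast
  show "top_club i \<inter> below (cond_height p) \<subseteq> cond_club p (cond_height p) i"
  proof
    fix x assume "x \<in> top_club i \<inter> below (cond_height p)"
    then obtain p' where "p' \<in> D" and x: "x \<in> cond_club p' (cond_height p') i" "x < cond_height p"
      unfolding top_club_def below_def by blast
    consider "cond_height p' = cond_height p" | "cond_height p < cond_height p'"
      | "cond_height p' < cond_height p" using less_linear by blast
    then show "x \<in> cond_club p (cond_height p) i"
    proof cases
      case 1
      then show ?thesis
        using x members_agree[OF \<open>p' \<in> D\<close> assms(1) cond_height_limit[OF member_in_P[OF assms(1)]]] by simp
    next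
      case 2
      then show ?thesis
        using x members_coherent[OF assms(1) \<open>p' \<in> D\<close> 2 assms(2,3)] unfolding below_def by blast
    next
      case 3
      then show ?thesis
        using x members_coherent[OF \<open>p' \<in> D\<close> assms(1) 3 assms(2,3)] by blast
    qed
  qed
qed

lemma top_club_below: "top_club i \<subseteq> below gamma"
  using cond_club_less[OF member_in_P] heights_below order.strict_trans
  unfolding top_club_def below_def by blast

lemma member_club_in:
  assumes "p \<in> D" "istar \<le> i" "i < k"
  shows "club_in (cond_club p (cond_height p) i) (cond_height p)"
  using assms cond_club_club[OF member_in_P order.refl cond_height_limit[OF member_in_P]]
    index_le_istar order.trans by blast

lemma top_club_club:
  assumes "istar \<le> i" "i < k"
  shows "club_in (top_club i) gamma"
  unfolding club_in_def
proof (intro conjI allI impI)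
  show "top_club i \<subseteq> below gamma" by (rule top_club_below)
next
  fix b assume "b < gamma"
  then obtain p where "p \<in> D" "b < cond_height p" using heights_cofinal by blast
  then obtain d where "d \<in> cond_club p (cond_height p) i" "b \<le> d"
    using member_club_in assms unfolding club_in_def by blast
  with \<open>p \<in> D\<close> show "\<exists>d\<in>top_club i. b \<le> d" unfolding top_club_def by blast
next
  fix b assume "b < gamma" and b: "is_limit b \<and> sup_eq (top_club i) b"
  then obtain p where "p \<in> D" "b < cond_height p" using heights_cofinal by blast
  then have "sup_eq (cond_club p (cond_height p) i) b"
    using sup_eq_restrict[of "top_club i" b "cond_height p"] b top_club_restrict assms by simp
  then have "b \<in> cond_club p (cond_height p) i"
    using member_club_in[OF \<open>p \<in> D\<close> assms] \<open>b < cond_height p\<close> b unfolding club_in_def by blast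
  with \<open>p \<in> D\<close> show "b \<in> top_club i" unfolding top_club_def by blast
qed

lemma top_club_mono:
  assumes "istar \<le> i" "i \<le> j" "j < k"
  shows "top_club i \<subseteq> top_club j"
  unfolding top_club_def
proof (rule UN_mono)
  fix p assume "p \<in> D"
  then show "cond_club p (cond_height p) i \<subseteq> cond_club p (cond_height p) j"
    using cond_club_mono[OF member_in_P order.refl cond_height_limit[OF member_in_P]]
      index_le_istar assms order.trans by blast
qed simp

lemma top_club_coherent:
  assumes "a < gamma" "is_limit a" "istar \<le> i" "i < k" "a \<in> derived (top_club i)"
  obtains p where "p \<in> D" "a < cond_height p" "cond_index p a \<le> i"
    "top_club i \<inter> below a = cond_club p a i"
proof -
  obtain p where "p \<in> D" "a < cond_height p" using heights_cofinal assms(1) by blast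
  have "a \<in> derived (cond_club p (cond_height p) i)"
    using derived_restrict[OF assms(5) \<open>a < cond_height p\<close>] top_club_restrict \<open>p \<in> D\<close> assms by simp
  then have "cond_index p a \<le> i \<and> cond_club p (cond_height p) i \<inter> below a = cond_club p a i"
    using cond_club_coherent[OF member_in_P[OF \<open>p \<in> D\<close>] assms(2)
        cond_height_limit[OF member_in_P[OF \<open>p \<in> D\<close>]] \<open>a < cond_height p\<close> order.refl]
      index_le_istar[OF \<open>p \<in> D\<close>] assms(3,4) order.trans by blast
  moreover have "top_club i \<inter> below a = (top_club i \<inter> below (cond_height p)) \<inter> below a"
    using \<open>a < cond_height p\<close> order.strict_trans unfolding below_def by blast
  ultimately show ?thesis
    using that \<open>p \<in> D\<close> \<open>a < cond_height p\<close> top_club_restrict assms(3,4) by simp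
qed

lemma top_club_derived_ex:
  assumes "a < gamma" "is_limit a"
  shows "\<exists>i. istar \<le> i \<and> i < k \<and> a \<in> derived (top_club i)"
proof -
  obtain p where "p \<in> D" "a < cond_height p" using heights_cofinal assms(1) by blast
  have p: "in_P lam k p" using member_in_P[OF \<open>p \<in> D\<close>] .
  obtain i0 where "i0 < k" and i0: "a \<in> derived (cond_club p (cond_height p) i0)"
    using cond_club_derived_ex[OF p assms(2) cond_height_limit[OF p] \<open>a < cond_height p\<close>] by blast
  define i where "i = max i0 istar"
  have "i < k" "istar \<le> i" using \<open>i0 < k\<close> istar_less by (simp_all add: i_def)
  have "cond_index p (cond_height p) \<le> i0"
    using i0 cond_club_nonempty[OF p] unfolding derived_def by blast
  then have "cond_club p (cond_height p) i0 \<subseteq> cond_club p (cond_height p) i"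
    using cond_club_mono[OF p order.refl cond_height_limit[OF p]] \<open>i < k\<close> by (simp add: i_def)
  also have "\<dots> \<subseteq> top_club i" using \<open>p \<in> D\<close> unfolding top_club_def by blast
  finally have "a \<in> derived (top_club i)" using i0 derived_mono by blast
  with \<open>i < k\<close> \<open>istar \<le> i\<close> show ?thesis by blast
qed

definition member_above :: "'o \<Rightarrow> 'o cond" where
  "member_above a = (SOME p. p \<in> D \<and> a < cond_height p)"

text \<open>Below \<gamma> the choice of member is irrelevant by \<open>members_agree\<close>.\<close>

definition limit_cond :: "'o cond" where
  "limit_cond = (gamma,
     \<lambda>a. if is_limit a \<and> a < gamma then cond_index (member_above a) a
         else if a = gamma then istar else undefined,
     \<lambda>a i. if is_limit a \<and> a < gamma then cond_club (member_above a) a i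
         else if a = gamma \<and> istar \<le> i \<and> i < k then top_club i else {})"

lemma member_above_spec: "a < gamma \<Longrightarrow> member_above a \<in> D \<and> a < cond_height (member_above a)"
  unfolding member_above_def using heights_cofinal by (rule someI2_bex) blast

lemma limit_cond_height: "cond_height limit_cond = gamma"
  by (simp add: limit_cond_def cond_height_def)

lemma limit_cond_top:
  "cond_index limit_cond gamma = istar"
  "cond_club limit_cond gamma i = (if istar \<le> i \<and> i < k then top_club i else {})"
  by (simp_all add: limit_cond_def cond_index_def cond_club_def)

lemma limit_cond_agrees:
  assumes "p \<in> D" "is_limit a" "a \<le> cond_height p"
  shows "cond_index limit_cond a = cond_index p a \<and> cond_club limit_cond a = cond_club p a"
proof -
  have "a < gamma" using assms(1,3) heights_below order.strict_trans1 by blast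
  then have "cond_index limit_cond a = cond_index (member_above a) a"
    "cond_club limit_cond a = cond_club (member_above a) a"
    using assms(2) by (simp_all add: limit_cond_def cond_index_def cond_club_def fun_eq_iff)
  moreover have "cond_index (member_above a) a = cond_index p a \<and> cond_club (member_above a) a = cond_club p a"
    using members_agree member_above_spec[OF \<open>a < gamma\<close>] assms less_imp_le by blast
  ultimately show ?thesis by simp
qed

lemma limit_cond_below_gamma:
  assumes "is_limit a" "a < gamma"
  obtains p where "p \<in> D" "a < cond_height p"
    "cond_index limit_cond a = cond_index p a" "cond_club limit_cond a = cond_club p a"
  using heights_cofinal[OF assms(2)] limit_cond_agrees assms(1) less_imp_le by blast

lemma limit_cond_index_less:
  assumes "a \<le> gamma" "is_limit a"
  shows "cond_index limit_cond a < k"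
proof (cases "a = gamma")
  case True
  then show ?thesis using limit_cond_top istar_less by simp
next
  case False
  with assms obtain p where "p \<in> D" "a < cond_height p" "cond_index limit_cond a = cond_index p a"
    using limit_cond_below_gamma by (metis order_le_less)
  then show ?thesis using cond_index_less[OF member_in_P] assms(2) less_imp_le by metis
qed

lemma limit_cond_club_in:
  assumes "a \<le> gamma" "is_limit a" "cond_index limit_cond a \<le> i" "i < k"
  shows "club_in (cond_club limit_cond a i) a"
proof (cases "a = gamma")
  case True
  then show ?thesis using assms limit_cond_top top_club_club by simp
next
  case False
  with assms obtain p where "p \<in> D" "a < cond_height p"
    "cond_index limit_cond a = cond_index p a" "cond_club limit_cond a = cond_club p a"
    using limit_cond_below_gamma by (metis order_le_less)
  then show ?thesis using cond_club_club[OF member_in_P] assms less_imp_le by metis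
qed

lemma limit_cond_club_mono:
  assumes "a \<le> gamma" "is_limit a" "cond_index limit_cond a \<le> i" "i < j" "j < k"
  shows "cond_club limit_cond a i \<subseteq> cond_club limit_cond a j"
proof (cases "a = gamma")
  case True
  with assms have "istar \<le> i" "istar \<le> j" "i < k" "i \<le> j" by (simp_all add: limit_cond_top)
  with True show ?thesis using assms(5) limit_cond_top top_club_mono by simp
next
  case False
  with assms obtain p where "p \<in> D" "a < cond_height p"
    "cond_index limit_cond a = cond_index p a" "cond_club limit_cond a = cond_club p a"
    using limit_cond_below_gamma by (metis order_le_less)
  then show ?thesis using cond_club_mono[OF member_in_P] assms less_imp_le by metis
qed

lemma limit_cond_coherent:
  assumes "is_limit a" "is_limit b" "a < b" "b \<le> gamma" "cond_index limit_cond b \<le> i" "i < k"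
    and "a \<in> derived (cond_club limit_cond b i)"
  shows "cond_index limit_cond a \<le> i \<and> cond_club limit_cond b i \<inter> below a = cond_club limit_cond a i"
proof (cases "b = gamma")
  case True
  then have "istar \<le> i" and top: "cond_club limit_cond b i = top_club i"
    using assms(5,6) limit_cond_top by simp_all
  moreover have "a < gamma" using assms(3,4) True by simp
  ultimately obtain p where "p \<in> D" "a < cond_height p" "cond_index p a \<le> i"
    "top_club i \<inter> below a = cond_club p a i"
    using top_club_coherent assms(1,6,7) by (metis top)
  with top show ?thesis
    using limit_cond_agrees[OF \<open>p \<in> D\<close> assms(1) less_imp_le] by simp
next
  case False
  with assms obtain p where p: "p \<in> D" "b < cond_height p"
    "cond_index limit_cond b = cond_index p b" "cond_club limit_cond b = cond_club p b"
    using limit_cond_below_gamma by (metis order_le_less)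
  moreover have "cond_index limit_cond a = cond_index p a \<and> cond_club limit_cond a = cond_club p a"
    using limit_cond_agrees[OF p(1) assms(1)] assms(3) p(2) by (simp add: less_imp_le)
  ultimately show ?thesis
    using cond_club_coherent[OF member_in_P[OF p(1)] assms(1,2,3)] assms(5,6,7) less_imp_le by simp
qed

lemma limit_cond_derived_ex:
  assumes "is_limit a" "is_limit b" "a < b" "b \<le> gamma"
  shows "\<exists>i<k. a \<in> derived (cond_club limit_cond b i)"
proof (cases "b = gamma")
  case True
  with assms obtain i where "istar \<le> i" "i < k" "a \<in> derived (top_club i)"
    using top_club_derived_ex by auto
  with True show ?thesis using limit_cond_top by auto
next
  case False
  with assms obtain p where "p \<in> D" "b < cond_height p" "cond_club limit_cond b = cond_club p b"
    using limit_cond_below_gamma by (metis order_le_less)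
  then show ?thesis using cond_club_derived_ex[OF member_in_P] assms less_imp_le by metis
qed

lemma limit_cond_index_outside:
  "\<not> (a \<le> gamma \<and> is_limit a) \<Longrightarrow> cond_index limit_cond a = undefined"
  using gamma_limit by (auto simp: limit_cond_def cond_index_def)

lemma limit_cond_club_outside:
  assumes "\<not> (a \<le> gamma \<and> is_limit a \<and> cond_index limit_cond a \<le> i \<and> i < k)"
  shows "cond_club limit_cond a i = {}"
proof (cases "is_limit a \<and> a < gamma")
  case True
  with assms obtain p where "p \<in> D" "a < cond_height p"
    "cond_index limit_cond a = cond_index p a" "cond_club limit_cond a = cond_club p a"
    using limit_cond_below_gamma by blast
  then show ?thesis using cond_club_outside[OF member_in_P] assms True less_imp_le by metis
next
  case False
  then show ?thesis using assms gamma_limit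
    by (auto simp: limit_cond_def cond_index_def cond_club_def)
qed

lemma limit_cond_in_P: "in_P lam k limit_cond"
  unfolding in_P_iff limit_cond_height
proof (intro conjI allI impI)
  show "gamma < lam" by (rule gamma_less)
  show "is_limit gamma" by (rule gamma_limit)
next
  fix a assume "a \<le> gamma" "is_limit a"
  then show "cond_index limit_cond a < k" by (rule limit_cond_index_less)
next
  fix a i assume "a \<le> gamma" "is_limit a" "cond_index limit_cond a \<le> i \<and> i < k"
  then show "club_in (cond_club limit_cond a i) a" by (simp add: limit_cond_club_in)
next
  fix a i j
  assume "a \<le> gamma" "is_limit a" "cond_index limit_cond a \<le> i \<and> i < j \<and> j < k"
  then show "cond_club limit_cond a i \<subseteq> cond_club limit_cond a j"
    by (simp add: limit_cond_club_mono)
next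
  fix a b i assume ab: "is_limit a \<and> is_limit b \<and> a < b \<and> b \<le> gamma"
    and i: "cond_index limit_cond b \<le> i \<and> i < k \<and> a \<in> derived (cond_club limit_cond b i)"
  have "cond_index limit_cond a \<le> i \<and> cond_club limit_cond b i \<inter> below a = cond_club limit_cond a i"
    by (intro limit_cond_coherent) (use ab i in simp_all)
  then show "cond_index limit_cond a \<le> i"
    and "cond_club limit_cond b i \<inter> below a = cond_club limit_cond a i" by simp_all
next
  fix a b assume ab: "is_limit a \<and> is_limit b \<and> a < b \<and> b \<le> gamma"
  show "\<exists>i<k. a \<in> derived (cond_club limit_cond b i)"
    by (intro limit_cond_derived_ex) (use ab in simp_all)
next
  fix a assume "\<not> (a \<le> gamma \<and> is_limit a)"
  then show "cond_index limit_cond a = undefined" by (rule limit_cond_index_outside)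
next
  fix a i assume "\<not> (a \<le> gamma \<and> is_limit a \<and> cond_index limit_cond a \<le> i \<and> i < k)"
  then show "cond_club limit_cond a i = {}" by (rule limit_cond_club_outside)
qed

lemma limit_cond_extends:
  assumes "p \<in> D"
  shows "ext_le k limit_cond p"
  unfolding ext_le_iff limit_cond_height
proof (intro conjI allI impI)
  show "cond_height p \<le> gamma" using heights_below[OF assms] by simp
next
  fix a assume "a \<le> cond_height p" "is_limit a"
  then show "cond_index limit_cond a = cond_index p a"
    using limit_cond_agrees[OF assms] by simp
next
  fix a i assume "a \<le> cond_height p" "is_limit a"
  then show "cond_club limit_cond a i = cond_club p a i"
    using limit_cond_agrees[OF assms] by simp
qed

end

theorem mainTheorem18:
  fixes k lam :: "'o::wellorder"
  assumes "infinite_regular_cardinal k" and "infinite_regular_cardinal lam" and "k < lam"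
  shows "directed_closed lam k"
  unfolding directed_closed_def
proof (intro allI impI, elim conjE)
  fix D :: "'o cond set"
  assume conds: "D \<subseteq> P lam k"
    and directed: "\<forall>p\<in>D. \<forall>p'\<in>D. \<exists>r\<in>D. ext_le k r p \<and> ext_le k r p'"
    and small: "|D| <o |below k|"
  interpret directed_family lam k D using conds directed by unfold_locales
  consider "D = {}" | p0 where "p0 \<in> D" "\<forall>p\<in>D. cond_height p \<le> cond_height p0"
    | "D \<noteq> {}" "\<forall>p\<in>D. \<exists>p'\<in>D. cond_height p < cond_height p'"
    using not_le by blast
  then show "\<exists>q\<in>P lam k. \<forall>p\<in>D. ext_le k q p"
  proof cases
    case 1
    then show ?thesis using P_nonempty assms(1,3) by blast
  next
    case 2
    then show ?thesis using highest_member_lower_bound conds by blast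
  next
    case 3
    obtain gamma where "gamma < lam" "is_limit gamma" "\<forall>p\<in>D. cond_height p < gamma"
      "\<forall>a<gamma. \<exists>p\<in>D. a < cond_height p"
      using height_sup_exists[OF assms small 3] .
    moreover obtain istar where "istar < k" "\<forall>p\<in>D. cond_index p (cond_height p) \<le> istar"
      "\<forall>p\<in>D. \<forall>p'\<in>D. \<forall>j. cond_height p < cond_height p' \<and> istar \<le> j \<and> j < k
         \<longrightarrow> cond_height p \<in> derived (cond_club p' (cond_height p') j)"
      using threshold_exists[OF assms(1) small] .
    ultimately interpret amalgamation lam k D gamma istar
      by unfold_locales blast+
    show ?thesis using limit_cond_in_P limit_cond_extends unfolding P_def by blast
  qed
qed

end
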